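(* Let $\Gamma,\Delta$ be finite sets of formulas, $\alpha$ an atomic mapping for $\Gamma\cup\Delta$, and $\mathcal{U}$ the simulation base for $\Gamma\cup\Delta$ and $\alpha$. Let $\Theta_{\mathsf{At}}$ be any (possibly empty) finite set of atoms, $\Sigma$ any non-empty finite set of subformulas of formulas in $\Gamma\cup\Delta$, and $\Sigma_{\mathsf{At}}=\{p^B\mid B\in\Sigma\}$. Then for every base $\mathcal{B}\supseteq\mathcal{U}_{\mathcal{ST}}$: $\Vdash_{\mathcal{B}}\Sigma,\Theta_{\mathsf{At}}$ if and only if $\vdash_{\mathcal{B}}\ \Rightarrow\Sigma_{\mathsf{At}},\Theta_{\mathsf{At}}$.
   Context: Fix a countably infinite set $\mathsf{At}$ of atoms. Formulas are built from atoms and the constant $\bot$ using the binary connectives $\land,\lor,\to$. All contexts are finite sets (not multisets) of formulas; a comma denotes union; a subscript $\mathsf{At}$ indicates a finite set of atoms. An atomic sequent has the form $\Gamma_{\mathsf{At}} \Rightarrow \Delta_{\mathsf{At}}$. An atomic rule has finitely many (possibly zero) atomic sequents as premises and one atomic sequent as conclusion; a rule with zero premises is an atomic axiom. A base is a (possibly empty) set of atomic rules; $\mathcal{C}\supseteq\mathcal{B}$ ($\mathcal{C}$ extends $\mathcal{B}$) if $\mathcal{C}$ contains every rule of $\mathcal{B}$. Derivability $\vdash_{\mathcal{B}}$ of atomic sequents is the least relation such that: (Axiom/Weakening) if an atomic axiom with conclusion $\Gamma_{\mathsf{At}}\Rightarrow\Delta_{\mathsf{At}}$ is in $\mathcal{B}$,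 then $\vdash_{\mathcal{B}} \Theta_{\mathsf{At}},\Gamma_{\mathsf{At}}\Rightarrow\Delta_{\mathsf{At}},\Sigma_{\mathsf{At}}$ for all sets of atoms $\Theta_{\mathsf{At}},\Sigma_{\mathsf{At}}$; (Mix) if a rule with premises $\Gamma^i_{\mathsf{At}}\Rightarrow\Delta^i_{\mathsf{At}}$ ($1\le i\le n$) and conclusion $\Gamma_{\mathsf{At}}\Rightarrow\Delta_{\mathsf{At}}$ is in $\mathcal{B}$ and $\vdash_{\mathcal{B}} \Theta^i_{\mathsf{At}},\Gamma^i_{\mathsf{At}}\Rightarrow\Delta^i_{\mathsf{At}},\Sigma^i_{\mathsf{At}}$ for each $i$, then $\vdash_{\mathcal{B}} \Theta^1_{\mathsf{At}},\dots,\Theta^n_{\mathsf{At}},\Gamma_{\mathsf{At}}\Rightarrow\Delta_{\mathsf{At}},\Sigma^1_{\mathsf{At}},\dots,\Sigma^n_{\mathsf{At}}$. Support $\Vdash_{\mathcal{B}}$: (At) $\Vdash_{\mathcal{B}}\Gamma_{\mathsf{At}}$ iff $\vdash_{\mathcal{B}}\ \Rightarrow\Gamma_{\mathsf{At}}$; ($\land$) $\Vdash_{\mathcal{B}} A\land B,\Gamma$ iff $\Vdash_{\mathcal{B}}A,\Gamma$ and $\Vdash_{\mathcal{B}}B,\Gamma$; ($\lor$) $\Vdash_{\mathcal{B}}A\lor B,\Gamma$ iff $\Vdash_{\mathcal{B}}A,B,\Gamma$; ($\to$) $\Vdash_{\mathcal{B}}A\to B,\Gamma$ iff $A\Vdash_{\mathcal{B}}B,\Gamma$;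 ($\bot$) $\Vdash_{\mathcal{B}}\bot,\Gamma$ iff $\Vdash_{\mathcal{B}}\Gamma$; (Inf) for $n\ge1$, $\{A^1,\dots,A^n\}\Vdash_{\mathcal{B}}\Delta$ iff for every $\mathcal{C}\supseteq\mathcal{B}$ and all sets of atoms $\Theta^1_{\mathsf{At}},\dots,\Theta^n_{\mathsf{At}}$, if $\Vdash_{\mathcal{C}}\Theta^i_{\mathsf{At}},A^i$ for all $i$ then $\Vdash_{\mathcal{C}}\Theta^1_{\mathsf{At}},\dots,\Theta^n_{\mathsf{At}},\Delta$ (and $\varnothing\Vdash_{\mathcal{B}}\Delta$ means $\Vdash_{\mathcal{B}}\Delta$). The atomic identity rule $\mathsf{Ainit}$ is the atomic axiom $\Gamma_{\mathsf{At}},p\Rightarrow p,\Delta_{\mathsf{At}}$; the atomic cut rule $\mathsf{Acut}$ has premises $\Gamma^1_{\mathsf{At}}\Rightarrow\Delta^1_{\mathsf{At}},p$ and $p,\Gamma^2_{\mathsf{At}}\Rightarrow\Delta^2_{\mathsf{At}}$ and conclusion $\Gamma^1_{\mathsf{At}},\Gamma^2_{\mathsf{At}}\Rightarrow\Delta^1_{\mathsf{At}},\Delta^2_{\mathsf{At}}$. $\mathcal{ST}$ is the base consisting of all instances of $\mathsf{Ainit}$ and $\mathsf{Acut}$. Atomic mapping: for a set of formulas $\Sigma_0$ with set of subformulas $S$, an atomic mapping is an injective function $\alpha:S\to\mathsf{At}$ with $\alpha(p)=p$ for every atom $p\in S$; write $p^A:=\alpha(A)$ (so $p^p=p$ for atoms).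 The simulation base $\mathcal{U}$ for $\Sigma_0$ and $\alpha$ consists exactly of the following atomic rules, for all formulas $A,B$ such that the displayed compound formula lies in $S$ (and for $p^\bot$ when $\bot\in S$), and all sets of atoms $\Gamma_{\mathsf{At}},\Delta_{\mathsf{At}},\Gamma'_{\mathsf{At}},\Delta'_{\mathsf{At}}$ (write $\Gamma,\Delta,\Gamma',\Delta'$ for these): $L\land$: from $p^A,p^B,\Gamma\Rightarrow\Delta$ infer $p^{A\land B},\Gamma\Rightarrow\Delta$; $R\land$: from $\Gamma\Rightarrow\Delta,p^A$ and $\Gamma'\Rightarrow\Delta',p^B$ infer $\Gamma,\Gamma'\Rightarrow\Delta,\Delta',p^{A\land B}$; $L\lor$: from $p^A,\Gamma\Rightarrow\Delta$ and $p^B,\Gamma'\Rightarrow\Delta'$ infer $p^{A\lor B},\Gamma,\Gamma'\Rightarrow\Delta,\Delta'$; $R\lor$: from $\Gamma\Rightarrow\Delta,p^A,p^B$ infer $\Gamma\Rightarrow\Delta,p^{A\lor B}$; $L\to$: from $\Gamma\Rightarrow\Delta,p^A$ and $p^B,\Gamma'\Rightarrow\Delta'$ infer $p^{A\to B},\Gamma,\Gamma'\Rightarrow\Delta,\Delta'$; $R\to$: from $p^A,\Gamma\Rightarrow\Delta,p^B$ infer $\Gamma\Rightarrow\Delta,p^{A\to B}$; $R\bot$: from $\Gamma\Rightarrow\Delta$ infer $\Gamma\Rightarrow\Delta,p^\bot$; $L\bot$: axiom $\Gamma,p^\bot\Rightarrow\Delta$. Put $\mathcal{U}_{\mathcal{ST}}:=\mathcal{U}\cup\mathcal{ST}$.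 *)

theory Defs
  imports Main
begin

type_synonym atom = nat

datatype form = Atom atom | Bot | And form form | Or form form | Imp form form

type_synonym aseq = "atom set \<times> atom set"
type_synonym arule = "aseq list \<times> aseq"

definition atomic_seq :: "aseq \<Rightarrow> bool" where
  "atomic_seq s \<longleftrightarrow> finite (fst s) \<and> finite (snd s)"

definition atomic_rule :: "arule \<Rightarrow> bool" where
  "atomic_rule r \<longleftrightarrow> (\<forall>s\<in>set (fst r). atomic_seq s) \<and> atomic_seq (snd r)"

definition is_base :: "arule set \<Rightarrow> bool" where
  "is_base B \<longleftrightarrow> (\<forall>r\<in>B. atomic_rule r)"

inductive derivable :: "arule set \<Rightarrow> aseq \<Rightarrow> bool" for B :: "arule set" where
  axiom: "\<lbrakk> ([], (G, D)) \<in> B; finite Th; finite Sg \<rbrakk>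
          \<Longrightarrow> derivable B (Th \<union> G, D \<union> Sg)"
| mix: "\<lbrakk> (ps, (G, D)) \<in> B;
          \<forall>i<length ps. finite (Th i) \<and> finite (Sg i)
                        \<and> derivable B (Th i \<union> fst (ps ! i), snd (ps ! i) \<union> Sg i) \<rbrakk>
        \<Longrightarrow> derivable B ((\<Union>i<length ps. Th i) \<union> G, D \<union> (\<Union>i<length ps. Sg i))"

fun is_atom :: "form \<Rightarrow> bool" where
  "is_atom (Atom p) = True"
| "is_atom _ = False"

fun wt :: "form \<Rightarrow> nat" where
  "wt (Atom p) = 0"
| "wt Bot = 1"
| "wt (And a b) = Suc (wt a + wt b)"
| "wt (Or a b) = Suc (wt a + wt b)"
| "wt (Imp a b) = Suc (wt a + wt b)"

text \<open>Otherwise, every compound formula of the context may be taken as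
  principal formula and the corresponding clause must hold (the clauses of the paper are
  stated as equivalences for an arbitrary choice of principal formula).  The implication
  clause is the (Inf) clause for a single antecedent formula.\<close>
function supp :: "arule set \<Rightarrow> form set \<Rightarrow> bool" where
  "supp B \<Gamma> =
    (if \<not> finite \<Gamma> then False
     else if (\<forall>F\<in>\<Gamma>. is_atom F) then derivable B ({}, {p. Atom p \<in> \<Gamma>})
     else (\<forall>F. F \<in> \<Gamma> \<longrightarrow>
       (case F of
          Atom p \<Rightarrow> True
        | Bot \<Rightarrow> supp B (\<Gamma> - {F})
        | And a b \<Rightarrow> supp B (insert a (\<Gamma> - {F})) \<and> supp B (insert b (\<Gamma> - {F}))
        | Or a b \<Rightarrow> supp B (insert a (insert b (\<Gamma> - {F})))
        | Imp a b \<Rightarrow> (\<forall>C Th. is_base C \<longrightarrow> B \<subseteq> C \<longrightarrow> finite Th \<longrightarrow>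
                         supp C (insert a (Atom ` Th)) \<longrightarrow>
                         supp C (Atom ` Th \<union> insert b (\<Gamma> - {F}))))))"
  by pat_completeness auto

lemma sum_wt_insert_le: "finite X \<Longrightarrow> sum wt (insert a X) \<le> wt a + sum wt X"
  by (simp add: sum.insert_if)

lemma sum_wt_remove: "finite X \<Longrightarrow> F \<in> X \<Longrightarrow> sum wt X = wt F + sum wt (X - {F})"
  by (simp add: sum.remove)

lemma sum_wt_atoms[simp]: "sum wt (Atom ` Th) = 0"
  by (rule sum.neutral) auto

termination
proof (relation "measure (\<lambda>(B, \<Gamma>). sum wt \<Gamma>)", goal_cases)
  case 1 then show ?case by simp
next
  case (2 B \<Gamma> F)
  then show ?case using sum_wt_remove[of \<Gamma> F] by simp
next
  case (3 B \<Gamma> F a b)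
  then show ?case using sum_wt_remove[of \<Gamma> F] sum_wt_insert_le[of "\<Gamma> - {F}" a] by simp
next
  case (4 B \<Gamma> F a b)
  then show ?case using sum_wt_remove[of \<Gamma> F] sum_wt_insert_le[of "\<Gamma> - {F}" b] by simp
next
  case (5 B \<Gamma> F a b)
  then show ?case using sum_wt_remove[of \<Gamma> F] sum_wt_insert_le[of "\<Gamma> - {F}" b]
      sum_wt_insert_le[of "insert b (\<Gamma> - {F})" a] by simp
next
  case (6 B \<Gamma> F a b C Th)
  then show ?case using sum_wt_remove[of \<Gamma> F] sum_wt_insert_le[of "Atom ` Th" a] by simp
next
  case (7 B \<Gamma> F a b C Th)
  have "sum wt (Atom ` Th \<union> insert b (\<Gamma> - {F})) \<le> sum wt (Atom ` Th) + sum wt (insert b (\<Gamma> - {F}))"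
    using 7 sum.union_inter[of "Atom ` Th" "insert b (\<Gamma> - {F})" wt] by simp
  then show ?case using 7 sum_wt_remove[of \<Gamma> F] sum_wt_insert_le[of "\<Gamma> - {F}" b] by simp
qed


fun subf :: "form \<Rightarrow> form set" where
  "subf (Atom p) = {Atom p}"
| "subf Bot = {Bot}"
| "subf (And a b) = insert (And a b) (subf a \<union> subf b)"
| "subf (Or a b) = insert (Or a b) (subf a \<union> subf b)"
| "subf (Imp a b) = insert (Imp a b) (subf a \<union> subf b)"

definition subfs :: "form set \<Rightarrow> form set" where
  "subfs S0 = (\<Union>F\<in>S0. subf F)"

text \<open>An atomic mapping for \<open>S0\<close>: injective on the subformulas, identity on atoms.
  \<open>\<alpha> A\<close> is the atom written \<open>p^A\<close> in the paper.\<close>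
definition atomic_mapping :: "form set \<Rightarrow> (form \<Rightarrow> atom) \<Rightarrow> bool" where
  "atomic_mapping S0 \<alpha> \<longleftrightarrow> inj_on \<alpha> (subfs S0) \<and> (\<forall>p. Atom p \<in> subfs S0 \<longrightarrow> \<alpha> (Atom p) = p)"

definition sim_base :: "form set \<Rightarrow> (form \<Rightarrow> atom) \<Rightarrow> arule set" where
  "sim_base S0 \<alpha> =
     {r. \<exists>A B G D G' D'. finite G \<and> finite D \<and> finite G' \<and> finite D' \<and>
        ( (And A B \<in> subfs S0 \<and>
            r = ([(insert (\<alpha> A) (insert (\<alpha> B) G), D)], (insert (\<alpha> (And A B)) G, D)))
        \<or> (And A B \<in> subfs S0 \<and>
            r = ([(G, insert (\<alpha> A) D), (G', insert (\<alpha> B) D')],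
                 (G \<union> G', insert (\<alpha> (And A B)) (D \<union> D'))))
        \<or> (Or A B \<in> subfs S0 \<and>
            r = ([(insert (\<alpha> A) G, D), (insert (\<alpha> B) G', D')],
                 (insert (\<alpha> (Or A B)) (G \<union> G'), D \<union> D')))
        \<or> (Or A B \<in> subfs S0 \<and>
            r = ([(G, insert (\<alpha> A) (insert (\<alpha> B) D))], (G, insert (\<alpha> (Or A B)) D)))
        \<or> (Imp A B \<in> subfs S0 \<and>
            r = ([(G, insert (\<alpha> A) D), (insert (\<alpha> B) G', D')],
                 (insert (\<alpha> (Imp A B)) (G \<union> G'), D \<union> D')))
        \<or> (Imp A B \<in> subfs S0 \<and>
            r = ([(insert (\<alpha> A) G, insert (\<alpha> B) D)], (G, insert (\<alpha> (Imp A B)) D)))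
        \<or> (Bot \<in> subfs S0 \<and> r = ([(G, D)], (G, insert (\<alpha> Bot) D)))
        \<or> (Bot \<in> subfs S0 \<and> r = ([], (insert (\<alpha> Bot) G, D))))}"

definition ST_base :: "arule set" where
  "ST_base =
     {r. \<exists>p G D. finite G \<and> finite D \<and> r = ([], (insert p G, insert p D))}
   \<union> {r. \<exists>p G1 D1 G2 D2. finite G1 \<and> finite D1 \<and> finite G2 \<and> finite D2 \<and>
        r = ([(G1, insert p D1), (insert p G2, D2)], (G1 \<union> G2, D1 \<union> D2))}"

definition sim_base_ST :: "form set \<Rightarrow> (form \<Rightarrow> atom) \<Rightarrow> arule set" where
  "sim_base_ST S0 \<alpha> = sim_base S0 \<alpha> \<union> ST_base"

end

theory Submission
  imports Defs
begin

text \<open>By induction on the total weight of \<open>\<Sigma>\<close>.  If \<open>\<Sigma>\<close> consists of atoms, both sides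
  are the same sequent, since \<open>\<alpha>\<close> fixes atoms.  Otherwise support amounts to the clauses of
  the compound formulas \<open>F \<in> \<Sigma>\<close>.  By the induction hypothesis the clause of \<open>F\<close> is
  equivalent to derivability of sequents in which \<open>p\<^sup>F\<close> is replaced by the atoms of the
  immediate subformulas of \<open>F\<close>, and the left and right rules of the simulation base for \<open>F\<close>,
  together with atomic identity and cut, turn this back into derivability of
  \<open>\<Rightarrow> p\<^sup>F, \<dots>\<close>.  The clause of an implication \<open>A \<rightarrow> B\<close> quantifies over all extensions of the
  base; for its converse direction one extends the base by the axiom \<open>\<Rightarrow> p\<^sup>A\<close>, which is
  discharged again by replacing each of its uses by an identity \<open>p\<^sup>A, \<Gamma>' \<Rightarrow> p\<^sup>A, \<Delta>'\<close>.\<close>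

declare supp.simps [simp del]

lemma subf_refl [simp]: "F \<in> subf F"
  by (cases F) auto

lemma subf_trans: "G \<in> subf F \<Longrightarrow> subf G \<subseteq> subf F"
  by (induction F) auto

lemma subfs_subf_closed: "F \<in> subfs S0 \<Longrightarrow> G \<in> subf F \<Longrightarrow> G \<in> subfs S0"
  unfolding subfs_def using subf_trans by blast

lemma derivable_by_rule:
  assumes "(ps, c) \<in> B" and "\<forall>s\<in>set ps. derivable B s"
  shows "derivable B c"
proof -
  obtain G D where c: "c = (G, D)"
    by fastforce
  have "derivable B ((\<Union>i<length ps. {}) \<union> G, D \<union> (\<Union>i<length ps. {}))"
    by (rule derivable.mix) (use assms c in auto)
  then show ?thesis
    using c by simp
qed

lemma derivable_mono: "derivable B s \<Longrightarrow> B \<subseteq> C \<Longrightarrow> derivable C s"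
proof (induction rule: derivable.induct)
  case (axiom G D Th Sg)
  then show ?case by (auto intro: derivable.axiom)
next
  case (mix ps G D Th Sg)
  then show ?case by (intro derivable.mix) auto
qed

lemma derivable_init:
  "ST_base \<subseteq> B \<Longrightarrow> finite G \<Longrightarrow> finite D \<Longrightarrow> derivable B (insert p G, insert p D)"
  by (rule derivable_by_rule[of "[]"]) (auto simp: ST_base_def)

lemma derivable_cut:
  assumes "ST_base \<subseteq> B" "derivable B (G1, insert p D1)" "derivable B (insert p G2, D2)"
    and "finite G1" "finite D1" "finite G2" "finite D2"
  shows "derivable B (G1 \<union> G2, D1 \<union> D2)"
proof (rule derivable_by_rule)
  show "([(G1, insert p D1), (insert p G2, D2)], (G1 \<union> G2, D1 \<union> D2)) \<in> B"
    using assms(1,4-) unfolding ST_base_def by blast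
qed (use assms(2,3) in auto)

lemma derivable_discharge_axiom:
  assumes "derivable (insert ([], ({}, {q})) B) s" and ST: "ST_base \<subseteq> B"
  shows "derivable B (insert q (fst s), snd s)"
  using assms(1)
proof (induction rule: derivable.induct)
  case (axiom G D Th Sg)
  show ?case
  proof (cases "([], (G, D)) \<in> B")
    case True
    then show ?thesis
      using derivable.axiom[OF True, of "insert q Th" Sg] axiom by simp
  next
    case False
    then have "G = {}" "D = {q}"
      using axiom by auto
    then show ?thesis
      using derivable_init[OF ST, of Th Sg q] axiom by simp
  qed
next
  case (mix ps G D Th Sg)
  consider "(ps, (G, D)) \<in> B" "ps \<noteq> []" | "ps = []" "([], (G, D)) \<in> B"
    | "ps = []" "G = {}" "D = {q}"
    using mix.hyps by auto
  then show ?case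
  proof cases
    case 1
    have "derivable B ((\<Union>i<length ps. insert q (Th i)) \<union> G, D \<union> (\<Union>i<length ps. Sg i))"
      by (rule derivable.mix[OF 1(1)]) (use mix in auto)
    moreover have "(\<Union>i<length ps. insert q (Th i)) = insert q (\<Union>i<length ps. Th i)"
      using 1(2) by auto
    ultimately show ?thesis
      by simp
  next
    case 2
    then show ?thesis
      using derivable.axiom[OF 2(2), of "{q}" "{}"] by simp
  next
    case 3
    then show ?thesis
      using derivable_init[OF ST, of "{}" "{}" q] by simp
  qed
qed

lemma sim_base_LAnd:
  "And A B \<in> subfs S0 \<Longrightarrow> finite G \<Longrightarrow> finite D \<Longrightarrow>
    ([(insert (\<alpha> A) (insert (\<alpha> B) G), D)], (insert (\<alpha> (And A B)) G, D)) \<in> sim_base S0 \<alpha>"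
  unfolding sim_base_def
  by (intro CollectI exI[of _ A] exI[of _ B] exI[of _ G] exI[of _ D]
      exI[of _ "{}"] exI[of _ "{}"]) simp

lemma sim_base_RAnd:
  "And A B \<in> subfs S0 \<Longrightarrow> finite G \<Longrightarrow> finite D \<Longrightarrow> finite G' \<Longrightarrow> finite D' \<Longrightarrow>
    ([(G, insert (\<alpha> A) D), (G', insert (\<alpha> B) D')],
      (G \<union> G', insert (\<alpha> (And A B)) (D \<union> D'))) \<in> sim_base S0 \<alpha>"
  unfolding sim_base_def
  by (intro CollectI exI[of _ A] exI[of _ B] exI[of _ G] exI[of _ D]
      exI[of _ G'] exI[of _ D']) simp

lemma sim_base_LOr:
  "Or A B \<in> subfs S0 \<Longrightarrow> finite G \<Longrightarrow> finite D \<Longrightarrow> finite G' \<Longrightarrow> finite D' \<Longrightarrow>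
    ([(insert (\<alpha> A) G, D), (insert (\<alpha> B) G', D')],
      (insert (\<alpha> (Or A B)) (G \<union> G'), D \<union> D')) \<in> sim_base S0 \<alpha>"
  unfolding sim_base_def
  by (intro CollectI exI[of _ A] exI[of _ B] exI[of _ G] exI[of _ D]
      exI[of _ G'] exI[of _ D']) simp

lemma sim_base_ROr:
  "Or A B \<in> subfs S0 \<Longrightarrow> finite G \<Longrightarrow> finite D \<Longrightarrow>
    ([(G, insert (\<alpha> A) (insert (\<alpha> B) D))], (G, insert (\<alpha> (Or A B)) D)) \<in> sim_base S0 \<alpha>"
  unfolding sim_base_def
  by (intro CollectI exI[of _ A] exI[of _ B] exI[of _ G] exI[of _ D]
      exI[of _ "{}"] exI[of _ "{}"]) simp

lemma sim_base_LImp: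
  "Imp A B \<in> subfs S0 \<Longrightarrow> finite G \<Longrightarrow> finite D \<Longrightarrow> finite G' \<Longrightarrow> finite D' \<Longrightarrow>
    ([(G, insert (\<alpha> A) D), (insert (\<alpha> B) G', D')],
      (insert (\<alpha> (Imp A B)) (G \<union> G'), D \<union> D')) \<in> sim_base S0 \<alpha>"
  unfolding sim_base_def
  by (intro CollectI exI[of _ A] exI[of _ B] exI[of _ G] exI[of _ D]
      exI[of _ G'] exI[of _ D']) simp

lemma sim_base_RImp:
  "Imp A B \<in> subfs S0 \<Longrightarrow> finite G \<Longrightarrow> finite D \<Longrightarrow>
    ([(insert (\<alpha> A) G, insert (\<alpha> B) D)], (G, insert (\<alpha> (Imp A B)) D)) \<in> sim_base S0 \<alpha>"
  unfolding sim_base_def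
  by (intro CollectI exI[of _ A] exI[of _ B] exI[of _ G] exI[of _ D]
      exI[of _ "{}"] exI[of _ "{}"]) simp

lemma sim_base_RBot:
  "Bot \<in> subfs S0 \<Longrightarrow> finite G \<Longrightarrow> finite D \<Longrightarrow>
    ([(G, D)], (G, insert (\<alpha> Bot) D)) \<in> sim_base S0 \<alpha>"
  unfolding sim_base_def
  by (intro CollectI exI[of _ Bot] exI[of _ Bot] exI[of _ G] exI[of _ D]
      exI[of _ "{}"] exI[of _ "{}"]) simp

lemma sim_base_LBot:
  "Bot \<in> subfs S0 \<Longrightarrow> finite G \<Longrightarrow> finite D \<Longrightarrow>
    ([], (insert (\<alpha> Bot) G, D)) \<in> sim_base S0 \<alpha>"
  unfolding sim_base_def
  by (intro CollectI exI[of _ Bot] exI[of _ Bot] exI[of _ G] exI[of _ D]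
      exI[of _ "{}"] exI[of _ "{}"]) simp

lemma sim_base_ST_subset_iff:
  "sim_base_ST S0 \<alpha> \<subseteq> B \<longleftrightarrow> sim_base S0 \<alpha> \<subseteq> B \<and> ST_base \<subseteq> B"
  by (simp add: sim_base_ST_def)

lemma derivable_sim_Bot_iff:
  assumes U: "sim_base S0 \<alpha> \<subseteq> B" and ST: "ST_base \<subseteq> B"
    and "Bot \<in> subfs S0" "finite R"
  shows "derivable B ({}, insert (\<alpha> Bot) R) \<longleftrightarrow> derivable B ({}, R)"
proof
  have "derivable B ({\<alpha> Bot}, {})"
    by (rule derivable_by_rule[OF subsetD[OF U sim_base_LBot]]) (use assms in auto)
  moreover assume "derivable B ({}, insert (\<alpha> Bot) R)"
  ultimately show "derivable B ({}, R)"
    using derivable_cut[OF ST, of "{}" "\<alpha> Bot" R "{}" "{}"] assms by simp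
next
  assume "derivable B ({}, R)"
  then show "derivable B ({}, insert (\<alpha> Bot) R)"
    by (intro derivable_by_rule[OF subsetD[OF U sim_base_RBot]]) (use assms in auto)
qed

lemma derivable_sim_And_iff:
  assumes U: "sim_base S0 \<alpha> \<subseteq> B" and ST: "ST_base \<subseteq> B"
    and "And A A' \<in> subfs S0" "finite R"
  shows "derivable B ({}, insert (\<alpha> (And A A')) R) \<longleftrightarrow>
         derivable B ({}, insert (\<alpha> A) R) \<and> derivable B ({}, insert (\<alpha> A') R)"
proof
  have proj: "derivable B ({\<alpha> (And A A')}, {\<alpha> C})" if "C \<in> {A, A'}" for C
  proof (rule derivable_by_rule[OF subsetD[OF U sim_base_LAnd]])
    show "\<forall>s\<in>set [({\<alpha> A, \<alpha> A'}, {\<alpha> C})]. derivable B s"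
      using derivable_init[OF ST, of "{\<alpha> A, \<alpha> A'}" "{}" "\<alpha> C"] that by (auto simp: insert_absorb)
  qed (use assms in auto)
  assume "derivable B ({}, insert (\<alpha> (And A A')) R)"
  from derivable_cut[OF ST this proj] assms(4)
  show "derivable B ({}, insert (\<alpha> A) R) \<and> derivable B ({}, insert (\<alpha> A') R)"
    by auto
next
  assume "derivable B ({}, insert (\<alpha> A) R) \<and> derivable B ({}, insert (\<alpha> A') R)"
  then show "derivable B ({}, insert (\<alpha> (And A A')) R)"
    using derivable_by_rule[OF subsetD[OF U sim_base_RAnd[where G="{}" and D=R and G'="{}" and D'=R]]]
      assms
    by simp
qed

lemma derivable_sim_Or_iff:
  assumes U: "sim_base S0 \<alpha> \<subseteq> B" and ST: "ST_base \<subseteq> B"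
    and "Or A A' \<in> subfs S0" "finite R"
  shows "derivable B ({}, insert (\<alpha> (Or A A')) R) \<longleftrightarrow>
         derivable B ({}, insert (\<alpha> A) (insert (\<alpha> A') R))"
proof
  have "derivable B ({\<alpha> (Or A A')}, {\<alpha> A, \<alpha> A'})"
    using derivable_by_rule[OF subsetD[OF U sim_base_LOr
        [where G="{}" and D="{\<alpha> A}" and G'="{}" and D'="{\<alpha> A'}"]]]
      derivable_init[OF ST] assms
    by (simp add: insert_commute)
  moreover assume "derivable B ({}, insert (\<alpha> (Or A A')) R)"
  ultimately show "derivable B ({}, insert (\<alpha> A) (insert (\<alpha> A') R))"
    using derivable_cut[OF ST, of "{}" "\<alpha> (Or A A')" R "{}" "{\<alpha> A, \<alpha> A'}"] assms(4)
    by (simp add: Un_ac)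
next
  assume "derivable B ({}, insert (\<alpha> A) (insert (\<alpha> A') R))"
  then show "derivable B ({}, insert (\<alpha> (Or A A')) R)"
    by (intro derivable_by_rule[OF subsetD[OF U sim_base_ROr]]) (use assms in auto)
qed

lemma derivable_sim_ImpE:
  assumes U: "sim_base S0 \<alpha> \<subseteq> B" and ST: "ST_base \<subseteq> B"
    and "Imp A A' \<in> subfs S0" "finite R" "finite Th"
    and imp: "derivable B ({}, insert (\<alpha> (Imp A A')) R)"
    and ant: "derivable B ({}, insert (\<alpha> A) Th)"
  shows "derivable B ({}, insert (\<alpha> A') (R \<union> Th))"
proof -
  have "derivable B ({\<alpha> (Imp A A')}, Th \<union> {\<alpha> A'})"
    using derivable_by_rule[OF subsetD[OF U sim_base_LImp
        [where G="{}" and D=Th and G'="{}" and D'="{\<alpha> A'}"]]]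
      derivable_init[OF ST] assms
    by simp
  then show ?thesis
    using derivable_cut[OF ST imp, of "{}" "Th \<union> {\<alpha> A'}"] assms(4,5) by simp
qed

lemma derivable_sim_Imp_iff:
  assumes U: "sim_base S0 \<alpha> \<subseteq> B" and ST: "ST_base \<subseteq> B"
    and "is_base B" "Imp A A' \<in> subfs S0" "finite R"
  shows "derivable B ({}, insert (\<alpha> (Imp A A')) R) \<longleftrightarrow>
    (\<forall>C Th. is_base C \<longrightarrow> B \<subseteq> C \<longrightarrow> finite Th \<longrightarrow>
       derivable C ({}, insert (\<alpha> A) Th) \<longrightarrow> derivable C ({}, insert (\<alpha> A') (R \<union> Th)))"
proof (intro iffI allI impI)
  fix C Th
  assume "derivable B ({}, insert (\<alpha> (Imp A A')) R)" "is_base C" "B \<subseteq> C" "finite Th"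
    and ant: "derivable C ({}, insert (\<alpha> A) Th)"
  then have "sim_base S0 \<alpha> \<subseteq> C" "ST_base \<subseteq> C" "derivable C ({}, insert (\<alpha> (Imp A A')) R)"
    using U ST derivable_mono by auto
  then show "derivable C ({}, insert (\<alpha> A') (R \<union> Th))"
    using derivable_sim_ImpE[where B=C] ant assms(4,5) \<open>finite Th\<close> by blast
next
  define C where "C = insert ([], ({}, {\<alpha> A})) B"
  assume deduction: "\<forall>C Th. is_base C \<longrightarrow> B \<subseteq> C \<longrightarrow> finite Th \<longrightarrow>
       derivable C ({}, insert (\<alpha> A) Th) \<longrightarrow> derivable C ({}, insert (\<alpha> A') (R \<union> Th))"
  have "is_base C"
    using assms(3) by (auto simp: C_def is_base_def atomic_rule_def atomic_seq_def)
  moreover have "B \<subseteq> C"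
    unfolding C_def by blast
  moreover have "derivable C ({}, insert (\<alpha> A) {})"
    by (rule derivable_by_rule[of "[]"]) (simp_all add: C_def)
  ultimately have "derivable C ({}, insert (\<alpha> A') (R \<union> {}))"
    by (rule deduction[rule_format, OF _ _ finite.emptyI])
  from derivable_discharge_axiom[OF this[unfolded C_def Un_empty_right] ST]
  have "derivable B (insert (\<alpha> A) {}, insert (\<alpha> A') R)"
    by simp
  then show "derivable B ({}, insert (\<alpha> (Imp A A')) R)"
    by (intro derivable_by_rule[OF subsetD[OF U sim_base_RImp]]) (use assms in auto)
qed

definition supp_clause :: "arule set \<Rightarrow> form set \<Rightarrow> form \<Rightarrow> bool" where
  "supp_clause B \<Gamma> F =
     (case F of
        Atom p \<Rightarrow> True
      | Bot \<Rightarrow> supp B (\<Gamma> - {F})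
      | And a b \<Rightarrow> supp B (insert a (\<Gamma> - {F})) \<and> supp B (insert b (\<Gamma> - {F}))
      | Or a b \<Rightarrow> supp B (insert a (insert b (\<Gamma> - {F})))
      | Imp a b \<Rightarrow> (\<forall>C Th. is_base C \<longrightarrow> B \<subseteq> C \<longrightarrow> finite Th \<longrightarrow>
                       supp C (insert a (Atom ` Th)) \<longrightarrow>
                       supp C (Atom ` Th \<union> insert b (\<Gamma> - {F}))))"

lemma supp_clause_if_is_atom: "is_atom F \<Longrightarrow> supp_clause B \<Gamma> F"
  by (cases F) (simp_all add: supp_clause_def)

lemma supp_atomic:
  "finite \<Gamma> \<Longrightarrow> \<forall>F\<in>\<Gamma>. is_atom F \<Longrightarrow> supp B \<Gamma> \<longleftrightarrow> derivable B ({}, {p. Atom p \<in> \<Gamma>})"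
  by (simp add: supp.simps)

lemma supp_iff_clauses:
  "finite \<Gamma> \<Longrightarrow> \<not> (\<forall>F\<in>\<Gamma>. is_atom F) \<Longrightarrow> supp B \<Gamma> \<longleftrightarrow> (\<forall>F\<in>\<Gamma>. supp_clause B \<Gamma> F)"
  unfolding supp_clause_def by (subst supp.simps) auto

lemma is_atom_iff: "is_atom F \<longleftrightarrow> (\<exists>p. F = Atom p)"
  by (cases F) auto

lemma atoms_of_atomic_set:
  assumes "\<forall>F\<in>\<Sigma>. is_atom F" and "\<And>p. Atom p \<in> \<Sigma> \<Longrightarrow> \<alpha> (Atom p) = p"
  shows "{p. Atom p \<in> \<Sigma> \<union> Atom ` \<Theta>} = \<alpha> ` \<Sigma> \<union> \<Theta>"
  using assms by (force simp: is_atom_iff)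

lemma supp_clause_iff_derivable:
  assumes sim: "sim_base_ST S0 \<alpha> \<subseteq> B" and "is_base B"
    and F: "F \<in> subfs S0" "\<not> is_atom F" "F \<notin> \<Pi>" and "finite \<Pi>" "finite \<Theta>"
    and IH: "\<And>X Y C Th. finite X \<Longrightarrow> X \<subseteq> subf F \<Longrightarrow> sum wt X < wt F \<Longrightarrow> Y \<subseteq> \<Pi> \<Longrightarrow>
      is_base C \<Longrightarrow> B \<subseteq> C \<Longrightarrow> finite Th \<Longrightarrow>
      supp C (X \<union> Y \<union> Atom ` Th) \<longleftrightarrow> derivable C ({}, \<alpha> ` X \<union> \<alpha> ` Y \<union> Th)"
  shows "supp_clause B (insert F (\<Pi> \<union> Atom ` \<Theta>)) F \<longleftrightarrow>
    derivable B ({}, insert (\<alpha> F) (\<alpha> ` \<Pi> \<union> \<Theta>))"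
proof -
  have U: "sim_base S0 \<alpha> \<subseteq> B" and ST: "ST_base \<subseteq> B"
    using sim by (simp_all add: sim_base_ST_subset_iff)
  define R where "R = \<alpha> ` \<Pi> \<union> \<Theta>"
  have "finite R"
    using assms by (simp add: R_def)
  have rest: "insert F (\<Pi> \<union> Atom ` \<Theta>) - {F} = \<Pi> \<union> Atom ` \<Theta>"
    using F by auto
  have IH_rest: "supp C (X \<union> \<Pi> \<union> Atom ` Th) \<longleftrightarrow> derivable C ({}, \<alpha> ` X \<union> \<alpha> ` \<Pi> \<union> Th)"
    if "finite X" "X \<subseteq> subf F" "sum wt X < wt F" "is_base C" "B \<subseteq> C" "finite Th" for X C Th
    using IH[of X \<Pi>] that by blast
  show ?thesis
  proof (cases F)
    case (Atom p)
    with F show ?thesis by simp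
  next
    case Bot
    have "supp_clause B (insert F (\<Pi> \<union> Atom ` \<Theta>)) F \<longleftrightarrow> supp B ({} \<union> \<Pi> \<union> Atom ` \<Theta>)"
      using Bot rest by (simp add: supp_clause_def)
    also have "\<dots> \<longleftrightarrow> derivable B ({}, R)"
      using IH_rest[of "{}" B \<Theta>] Bot assms by (simp add: R_def)
    also have "\<dots> \<longleftrightarrow> derivable B ({}, insert (\<alpha> F) R)"
      using derivable_sim_Bot_iff[OF U ST] Bot F \<open>finite R\<close> by simp
    finally show ?thesis
      by (simp add: R_def)
  next
    case (And A A')
    have "supp_clause B (insert F (\<Pi> \<union> Atom ` \<Theta>)) F \<longleftrightarrow>
        supp B ({A} \<union> \<Pi> \<union> Atom ` \<Theta>) \<and> supp B ({A'} \<union> \<Pi> \<union> Atom ` \<Theta>)"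
      using And rest by (simp add: supp_clause_def)
    also have "\<dots> \<longleftrightarrow> derivable B ({}, insert (\<alpha> A) R) \<and> derivable B ({}, insert (\<alpha> A') R)"
      using IH_rest[of "{A}" B \<Theta>] IH_rest[of "{A'}" B \<Theta>] And assms by (simp add: R_def)
    also have "\<dots> \<longleftrightarrow> derivable B ({}, insert (\<alpha> F) R)"
      using derivable_sim_And_iff[OF U ST] And F \<open>finite R\<close> by simp
    finally show ?thesis
      by (simp add: R_def)
  next
    case (Or A A')
    have "sum wt {A, A'} < wt F"
      using Or by (cases "A = A'") auto
    have "supp_clause B (insert F (\<Pi> \<union> Atom ` \<Theta>)) F \<longleftrightarrow> supp B ({A, A'} \<union> \<Pi> \<union> Atom ` \<Theta>)"
      using Or rest by (simp add: supp_clause_def)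
    also have "\<dots> \<longleftrightarrow> derivable B ({}, insert (\<alpha> A) (insert (\<alpha> A') R))"
      using IH_rest[of "{A, A'}" B \<Theta>] \<open>sum wt {A, A'} < wt F\<close> Or assms by (simp add: R_def)
    also have "\<dots> \<longleftrightarrow> derivable B ({}, insert (\<alpha> F) R)"
      using derivable_sim_Or_iff[OF U ST] Or F \<open>finite R\<close> by simp
    finally show ?thesis
      by (simp add: R_def)
  next
    case (Imp A A')
    have "Atom ` Th \<union> insert A' (\<Pi> \<union> Atom ` \<Theta>) = {A'} \<union> \<Pi> \<union> Atom ` (Th \<union> \<Theta>)" for Th
      by auto
    then have "supp_clause B (insert F (\<Pi> \<union> Atom ` \<Theta>)) F \<longleftrightarrow>
        (\<forall>C Th. is_base C \<longrightarrow> B \<subseteq> C \<longrightarrow> finite Th \<longrightarrow>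
          supp C ({A} \<union> {} \<union> Atom ` Th) \<longrightarrow> supp C ({A'} \<union> \<Pi> \<union> Atom ` (Th \<union> \<Theta>)))"
      using Imp rest by (simp add: supp_clause_def)
    also have "\<dots> \<longleftrightarrow> (\<forall>C Th. is_base C \<longrightarrow> B \<subseteq> C \<longrightarrow> finite Th \<longrightarrow>
          derivable C ({}, insert (\<alpha> A) Th) \<longrightarrow> derivable C ({}, insert (\<alpha> A') (R \<union> Th)))"
    proof -
      have "supp C ({A} \<union> {} \<union> Atom ` Th) \<longleftrightarrow> derivable C ({}, insert (\<alpha> A) Th)"
        "supp C ({A'} \<union> \<Pi> \<union> Atom ` (Th \<union> \<Theta>)) \<longleftrightarrow> derivable C ({}, insert (\<alpha> A') (R \<union> Th))"
        if "is_base C" "B \<subseteq> C" "finite Th" for C Th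
        using IH[of "{A}" "{}" C Th] IH_rest[of "{A'}" C "Th \<union> \<Theta>"] that Imp assms
        by (auto simp: R_def Un_ac)
      then show ?thesis
        by auto
    qed
    also have "\<dots> \<longleftrightarrow> derivable B ({}, insert (\<alpha> F) R)"
      using derivable_sim_Imp_iff[OF U ST \<open>is_base B\<close>] Imp F \<open>finite R\<close> by simp
    finally show ?thesis
      by (simp add: R_def)
  qed
qed

lemma sum_wt_Un_lt:
  assumes "finite X" "sum wt X < wt F" "F \<in> \<Sigma>" "finite \<Sigma>" "Y \<subseteq> \<Sigma> - {F}"
  shows "sum wt (X \<union> Y) < sum wt \<Sigma>"
proof -
  have "finite Y"
    using assms(4,5) by (simp add: finite_subset)
  then have "sum wt (X \<union> Y) \<le> sum wt X + sum wt (\<Sigma> - {F})"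
    using sum_Un_nat[of X Y wt] sum_mono2[of "\<Sigma> - {F}" Y wt] assms(1,4,5) by simp
  also have "\<dots> < sum wt \<Sigma>"
    using sum_wt_remove[of \<Sigma> F] assms(2-4) by simp
  finally show ?thesis .
qed

lemma supp_iff_derivable_sim:
  assumes fixes_atoms: "\<And>p. Atom p \<in> subfs S0 \<Longrightarrow> \<alpha> (Atom p) = p"
    and "is_base B" "sim_base_ST S0 \<alpha> \<subseteq> B" "finite \<Theta>" "finite \<Sigma>" "\<Sigma> \<subseteq> subfs S0"
  shows "supp B (\<Sigma> \<union> Atom ` \<Theta>) \<longleftrightarrow> derivable B ({}, \<alpha> ` \<Sigma> \<union> \<Theta>)"
  using assms(2-)
proof (induction "sum wt \<Sigma>" arbitrary: \<Sigma> B \<Theta> rule: less_induct)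
  case (less \<Sigma> B \<Theta>)
  show ?case
  proof (cases "\<forall>F\<in>\<Sigma>. is_atom F")
    case True
    have "{p. Atom p \<in> \<Sigma> \<union> Atom ` \<Theta>} = \<alpha> ` \<Sigma> \<union> \<Theta>"
      using True fixes_atoms less.prems by (intro atoms_of_atomic_set) auto
    moreover have "\<forall>F\<in>\<Sigma> \<union> Atom ` \<Theta>. is_atom F"
      using True by auto
    ultimately show ?thesis
      using less.prems by (simp add: supp_atomic)
  next
    case False
    have clause: "supp_clause B (\<Sigma> \<union> Atom ` \<Theta>) F \<longleftrightarrow> derivable B ({}, \<alpha> ` \<Sigma> \<union> \<Theta>)"
      if F: "F \<in> \<Sigma>" "\<not> is_atom F" for F
    proof -
      let ?\<Pi> = "\<Sigma> - {F}"
      have "supp_clause B (insert F (?\<Pi> \<union> Atom ` \<Theta>)) F \<longleftrightarrow>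
          derivable B ({}, insert (\<alpha> F) (\<alpha> ` ?\<Pi> \<union> \<Theta>))"
      proof (rule supp_clause_iff_derivable[of S0])
        fix X Y C and Th :: "atom set"
        assume X: "finite X" "X \<subseteq> subf F" "sum wt X < wt F"
          and C: "Y \<subseteq> ?\<Pi>" "is_base C" "B \<subseteq> C" "finite Th"
        have "X \<union> Y \<subseteq> subfs S0"
          using X(2) C(1) F(1) less.prems(5) subfs_subf_closed by blast
        moreover have "finite (X \<union> Y)"
          using X(1) C(1) less.prems(4) by (simp add: finite_subset)
        moreover have "sim_base_ST S0 \<alpha> \<subseteq> C"
          using less.prems(2) C(3) by blast
        moreover have "sum wt (X \<union> Y) < sum wt \<Sigma>"
          using sum_wt_Un_lt X(1,3) C(1) F(1) less.prems(4) by blast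
        ultimately have "supp C ((X \<union> Y) \<union> Atom ` Th) \<longleftrightarrow> derivable C ({}, \<alpha> ` (X \<union> Y) \<union> Th)"
          using less.hyps[of "X \<union> Y" C Th] C(2,4) by blast
        then show "supp C (X \<union> Y \<union> Atom ` Th) \<longleftrightarrow> derivable C ({}, \<alpha> ` X \<union> \<alpha> ` Y \<union> Th)"
          by (simp add: image_Un)
      qed (use less.prems F in auto)
      moreover have "insert F (?\<Pi> \<union> Atom ` \<Theta>) = \<Sigma> \<union> Atom ` \<Theta>"
        "insert (\<alpha> F) (\<alpha> ` ?\<Pi> \<union> \<Theta>) = \<alpha> ` \<Sigma> \<union> \<Theta>"
        using F by auto
      ultimately show ?thesis
        by simp
    qed
    from False obtain F0 where F0: "F0 \<in> \<Sigma>" "\<not> is_atom F0"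
      by blast
    then have "supp B (\<Sigma> \<union> Atom ` \<Theta>) \<longleftrightarrow> (\<forall>F\<in>\<Sigma> \<union> Atom ` \<Theta>. supp_clause B (\<Sigma> \<union> Atom ` \<Theta>) F)"
      using less.prems by (intro supp_iff_clauses) auto
    also have "\<dots> \<longleftrightarrow> derivable B ({}, \<alpha> ` \<Sigma> \<union> \<Theta>)"
      using clause F0 supp_clause_if_is_atom by fastforce
    finally show ?thesis .
  qed
qed

theorem lemma5:
  fixes \<Gamma> \<Delta> \<Sigma> :: "form set" and \<alpha> :: "form \<Rightarrow> atom" and \<Theta> :: "atom set"
    and \<B> :: "arule set"
  assumes "finite \<Gamma>" and "finite \<Delta>"
    and "atomic_mapping (\<Gamma> \<union> \<Delta>) \<alpha>"
    and "finite \<Theta>"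
    and "finite \<Sigma>" and "\<Sigma> \<noteq> {}" and "\<Sigma> \<subseteq> subfs (\<Gamma> \<union> \<Delta>)"
    and "is_base \<B>" and "sim_base_ST (\<Gamma> \<union> \<Delta>) \<alpha> \<subseteq> \<B>"
  shows "supp \<B> (\<Sigma> \<union> Atom ` \<Theta>) \<longleftrightarrow> derivable \<B> ({}, \<alpha> ` \<Sigma> \<union> \<Theta>)"
  using assms(3) by (intro supp_iff_derivable_sim[of "\<Gamma> \<union> \<Delta>"] assms(4-9))
    (simp add: atomic_mapping_def)

end
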